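(* Let $(K,\mathrm{val})$ be a $2$-henselian valued field whose residue class field $F$ is a euclidean field, and assume $(K,\mathrm{val})$ admits an angular component map $\mathrm{an}:K^\times\to F^\times$. Then: (1) $K$ is pythagorean, i.e. every sum of squares in $K$ is a square; (2) $\operatorname{PO}_K(1)=K^2$ and $\operatorname{PO}_K(-1)=K$; (3) for every $f\in K\setminus\{0\}$, $\operatorname{PO}_K(f)\in\{K^2,K\}$ if and only if $\mathrm{val}(f)\in G^2$; in particular, there exists $f\in K$ with $\operatorname{PO}_K(f)\ne K^2$ and $\operatorname{PO}_K(f)\ne K$ if and only if $G\ne G^2$; (4) every monogenic quadratic module $\operatorname{PO}_K(f)$ satisfies $K^2\subseteq\operatorname{PO}_K(f)\subseteq K$, and if $f_1,f_2\in K$ are such that $\operatorname{PO}_K(f_i)\notin\{K,K^2\}$ for $i=1,2$ and $\operatorname{PO}_K(f_1)\subseteq\operatorname{PO}_K(f_2)$, then $\operatorname{PO}_K(f_1)=\operatorname{PO}_K(f_2)$.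
   Context: Let $(G,\le)$ be a totally ordered abelian group written multiplicatively with identity $e$, and $G^2=\{g^2:g\in G\}$. Let $(K,\mathrm{val})$ be a valued field with surjective valuation $\mathrm{val}:K\to G\cup\{\infty\}$, valuation ring $B=\{x:\mathrm{val}(x)\ge e\}$, residue map $\pi:B\to F$, residue field $F$. A euclidean field is a formally real field $F$ with $F=F^2\cup(-F^2)$ (in particular $\mathrm{char}F=0$); $2$-henselian is then equivalent to every $x\in B^\times$ with $\pi(x)=1$ being a square in $K$. For $g\in G$, $\overline g$ denotes its class in $G/G^2$. An angular component map is a group homomorphism $\mathrm{an}:K^\times\to F^\times$ satisfying: (1) $\mathrm{an}(u)=\pi(u)$ for $u\in B^\times$; (2) $\mathrm{an}(ux)=\pi(u)\mathrm{an}(x)$; (3) for all $g\in G$, $c\in F^\times$ there is $w\in K$ with $\mathrm{val}(w)=g$, $\mathrm{an}(w)=c$; (4) for nonzero $x_1,x_2$ with $x_1+x_2\ne0$: if $\mathrm{val}(x_1)<\mathrm{val}(x_2)$ then $\mathrm{an}(x_1+x_2)=\mathrm{an}(x_1)$; if $\mathrm{val}(x_1)=\mathrm{val}(x_2)$ and $\mathrm{an}(x_1)+\mathrm{an}(x_2)\ne0$ then $\mathrm{val}(x_1+x_2)=\mathrm{val}(x_1)$ and $\mathrm{an}(x_1+x_2)=\mathrm{an}(x_1)+\mathrm{an}(x_2)$; (5) if $\overline{\mathrm{val}(x)}=\overline{\mathrm{val}(y)}$ and $\mathrm{an}(x)=\mathrm{an}(y)$ then $y=u^2x$ for some $u\in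 K^\times$; (6) for $a,u\in K^\times$, $\mathrm{an}(au^2)=\mathrm{an}(a)k^2$ for some $k\in F^\times$. For $f\in K$, $\operatorname{PO}_K(f)=\{\sigma_0+\sigma_1f:\ \sigma_0,\sigma_1\text{ finite sums of squares in }K\}$ is the monogenic quadratic module generated by $f$; $K^2=\{x^2:x\in K\}$. *)

theory Defs
  imports Main
begin

text \<open>The value group G is written additively: a linearly ordered abelian group
  type 'g. The valuation is v : K^x \<rightarrow> G (v 0 = \<infinity> is left implicit:
  v is only constrained on nonzero elements).  G^2 becomes {g + g}.\<close>

definition valuation :: "('k::field \<Rightarrow> 'g::linordered_ab_group_add) \<Rightarrow> bool" where
  "valuation v \<longleftrightarrow>
     (\<forall>x y. x \<noteq> 0 \<longrightarrow> y \<noteq> 0 \<longrightarrow> v (x * y) = v x + v y) \<and>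
     (\<forall>x y. x \<noteq> 0 \<longrightarrow> y \<noteq> 0 \<longrightarrow> x + y \<noteq> 0 \<longrightarrow> min (v x) (v y) \<le> v (x + y)) \<and>
     (\<forall>g. \<exists>x. x \<noteq> 0 \<and> v x = g)"

definition val_ring :: "('k::field \<Rightarrow> 'g::linordered_ab_group_add) \<Rightarrow> 'k set" where
  "val_ring v = {x. x = 0 \<or> 0 \<le> v x}"

definition val_units :: "('k::field \<Rightarrow> 'g::linordered_ab_group_add) \<Rightarrow> 'k set" where
  "val_units v = {x. x \<noteq> 0 \<and> v x = 0}"

definition residue_map ::
  "('k::field \<Rightarrow> 'g::linordered_ab_group_add) \<Rightarrow> ('k \<Rightarrow> 'f::field) \<Rightarrow> bool" where
  "residue_map v res \<longleftrightarrow>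
     (\<forall>x\<in>val_ring v. \<forall>y\<in>val_ring v. res (x + y) = res x + res y \<and> res (x * y) = res x * res y) \<and>
     res 1 = 1 \<and>
     (\<forall>c. \<exists>x\<in>val_ring v. res x = c) \<and>
     (\<forall>x\<in>val_ring v. res x = 0 \<longleftrightarrow> (x = 0 \<or> 0 < v x))"

definition sum_of_squares :: "'a::comm_ring_1 \<Rightarrow> bool" where
  "sum_of_squares s \<longleftrightarrow> (\<exists>xs. s = sum_list (map (\<lambda>x. x ^ 2) xs))"

definition formally_real :: "'a::field itself \<Rightarrow> bool" where
  "formally_real _ \<longleftrightarrow> \<not> sum_of_squares (- 1 :: 'a)"

definition euclidean_field :: "'a::field itself \<Rightarrow> bool" where
  "euclidean_field T \<longleftrightarrow> formally_real T \<and>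
     (\<forall>x::'a. (\<exists>y. x = y ^ 2) \<or> (\<exists>y. x = - (y ^ 2)))"

text \<open>2-henselian, in the form stated in the paper for residue characteristic 0 (here F euclidean).\<close>

definition two_henselian ::
  "('k::field \<Rightarrow> 'g::linordered_ab_group_add) \<Rightarrow> ('k \<Rightarrow> 'f::field) \<Rightarrow> bool" where
  "two_henselian v res \<longleftrightarrow> (\<forall>x\<in>val_units v. res x = 1 \<longrightarrow> (\<exists>y. x = y ^ 2))"

definition angular_component ::
  "('k::field \<Rightarrow> 'g::linordered_ab_group_add) \<Rightarrow> ('k \<Rightarrow> 'f::field) \<Rightarrow> ('k \<Rightarrow> 'f) \<Rightarrow> bool" where
  "angular_component v res an \<longleftrightarrow>
     \<comment> \<open>group homomorphism K^x \<rightarrow> F^x\<close>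
     (\<forall>x. x \<noteq> 0 \<longrightarrow> an x \<noteq> 0) \<and>
     (\<forall>x y. x \<noteq> 0 \<longrightarrow> y \<noteq> 0 \<longrightarrow> an (x * y) = an x * an y) \<and>
     \<comment> \<open>(1)\<close>
     (\<forall>u\<in>val_units v. an u = res u) \<and>
     \<comment> \<open>(2)\<close>
     (\<forall>u\<in>val_units v. \<forall>x. x \<noteq> 0 \<longrightarrow> an (u * x) = res u * an x) \<and>
     \<comment> \<open>(3)\<close>
     (\<forall>g c. c \<noteq> 0 \<longrightarrow> (\<exists>w. w \<noteq> 0 \<and> v w = g \<and> an w = c)) \<and>
     \<comment> \<open>(4)\<close>
     (\<forall>x1 x2. x1 \<noteq> 0 \<longrightarrow> x2 \<noteq> 0 \<longrightarrow> x1 + x2 \<noteq> 0 \<longrightarrow>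
        (v x1 < v x2 \<longrightarrow> an (x1 + x2) = an x1) \<and>
        (v x1 = v x2 \<longrightarrow> an x1 + an x2 \<noteq> 0 \<longrightarrow>
           v (x1 + x2) = v x1 \<and> an (x1 + x2) = an x1 + an x2)) \<and>
     \<comment> \<open>(5): equal classes in G/G^2 and equal angular components\<close>
     (\<forall>x y. x \<noteq> 0 \<longrightarrow> y \<noteq> 0 \<longrightarrow> (\<exists>g. v x - v y = g + g) \<longrightarrow> an x = an y \<longrightarrow>
        (\<exists>u. u \<noteq> 0 \<and> y = u ^ 2 * x)) \<and>
     \<comment> \<open>(6)\<close>
     (\<forall>a u. a \<noteq> 0 \<longrightarrow> u \<noteq> 0 \<longrightarrow> (\<exists>k. k \<noteq> 0 \<and> an (a * u ^ 2) = an a * k ^ 2))"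

definition PO :: "'k::field \<Rightarrow> 'k set" where
  "PO f = {s0 + s1 * f | s0 s1. sum_of_squares s0 \<and> sum_of_squares s1}"

definition squares :: "'k::field set" where
  "squares = {x ^ 2 | x. True}"

end

theory Submission
  imports Defs
begin

text \<open>The residue field F is euclidean, so 1 + c^2 is a nonzero square in F and every
  residue is plus or minus a square; 2-henselianity lifts squares of residues to squares of units.
  Hence 1 + t^2 is a square whenever v t \<ge> 0, which makes K pythagorean, and every unit is
  plus or minus a square. If v f = 2g, then f = \<plusminus>w^2 and PO f is K^2 or K. If v f is not
  in 2G, then the two summands of a^2 + b^2 f have different values and the one of smaller
  value dominates, so a^2 + b^2 f is c^2 or c^2 f. Thus -1 \<notin> PO f and f \<notin> K^2, and
  f1 \<in> PO f2 forces f1 = c^2 f2.\<close>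

lemma square_sum_of_squares: "sum_of_squares ((y::'a::comm_ring_1)^2)"
  unfolding sum_of_squares_def by (rule exI[of _ "[y]"]) simp

lemma squares_subset_PO: "squares \<subseteq> PO (f::'k::field)"
proof
  fix x :: 'k assume "x \<in> squares"
  then obtain y where "x = y^2 + 0^2 * f" unfolding squares_def by auto
  then show "x \<in> PO f"
    unfolding PO_def using square_sum_of_squares by blast
qed

lemma mem_PO_self: "(f::'k::field) \<in> PO f"
  unfolding PO_def using square_sum_of_squares[of "0::'k"] square_sum_of_squares[of "1::'k"]
  by force

locale valued_field =
  fixes v :: "'k::field \<Rightarrow> 'g::linordered_ab_group_add"
  assumes valuation: "valuation v"
begin

lemma v_mult: "x \<noteq> 0 \<Longrightarrow> y \<noteq> 0 \<Longrightarrow> v (x * y) = v x + v y"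
  using valuation unfolding valuation_def by blast

lemma v_add: "x \<noteq> 0 \<Longrightarrow> y \<noteq> 0 \<Longrightarrow> x + y \<noteq> 0 \<Longrightarrow> min (v x) (v y) \<le> v (x + y)"
  using valuation unfolding valuation_def by blast

lemma v_surj: "\<exists>x. x \<noteq> 0 \<and> v x = g"
  using valuation unfolding valuation_def by blast

lemma v_one [simp]: "v 1 = 0"
  using v_mult[of 1 1] by simp

lemma v_minus_one [simp]: "v (- 1) = 0"
  using v_mult[of "- 1" "- 1"] by simp

lemma v_minus: "x \<noteq> 0 \<Longrightarrow> v (- x) = v x"
  using v_mult[of "- 1" x] by simp

lemma v_divide: "x \<noteq> 0 \<Longrightarrow> y \<noteq> 0 \<Longrightarrow> v (x / y) = v x - v y"
  using v_mult[of "x / y" y] by (simp add: algebra_simps)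

lemma v_power2: "x \<noteq> 0 \<Longrightarrow> v (x^2) = v x + v x"
  by (simp add: power2_eq_square v_mult)

lemma v_add_eq_of_less:
  assumes "x \<noteq> 0" "y \<noteq> 0" "v x < v y"
  shows "x + y \<noteq> 0" "v (x + y) = v x"
proof -
  show sum: "x + y \<noteq> 0"
    using assms v_minus[of x] by (metis add_eq_0_iff order.irrefl)
  have "min (v x) (v y) \<le> v (x + y)"
    using v_add assms sum by blast
  moreover have "min (v (x + y)) (v (- y)) \<le> v x"
    using v_add[of "x + y" "- y"] assms sum by simp
  ultimately show "v (x + y) = v x"
    using assms v_minus[of y] by (auto simp: min_def split: if_splits)
qed

lemma even_value_mult_square_iff:
  "c \<noteq> 0 \<Longrightarrow> f \<noteq> 0 \<Longrightarrow> (\<exists>g. v (c^2 * f) = g + g) \<longleftrightarrow> (\<exists>g. v f = g + g)"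
proof -
  assume "c \<noteq> 0" "f \<noteq> 0"
  then have val: "v (c^2 * f) = (v c + v c) + v f"
    by (simp add: v_mult v_power2)
  show ?thesis
  proof
    assume "\<exists>g. v (c^2 * f) = g + g"
    then obtain g where "v (c^2 * f) = g + g" ..
    then have "v f = (g - v c) + (g - v c)"
      using val by (simp add: algebra_simps)
    then show "\<exists>g. v f = g + g" ..
  next
    assume "\<exists>g. v f = g + g"
    then obtain g where "v f = g + g" ..
    then have "v (c^2 * f) = (v c + g) + (v c + g)"
      using val by (simp add: algebra_simps)
    then show "\<exists>g. v (c^2 * f) = g + g" ..
  qed
qed

lemma val_ring_mult: "x \<in> val_ring v \<Longrightarrow> y \<in> val_ring v \<Longrightarrow> x * y \<in> val_ring v"
  by (cases "x = 0"; cases "y = 0") (auto simp: val_ring_def v_mult)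

lemma val_ring_add: "x \<in> val_ring v \<Longrightarrow> y \<in> val_ring v \<Longrightarrow> x + y \<in> val_ring v"
  unfolding val_ring_def using v_add[of x y]
  by (cases "x = 0"; cases "y = 0"; cases "x + y = 0") (auto simp: min_def split: if_splits)

end

locale residue_valued_field = valued_field v
  for v :: "'k::field \<Rightarrow> 'g::linordered_ab_group_add" +
  fixes res :: "'k \<Rightarrow> 'f::field"
  assumes residue_map: "residue_map v res"
begin

lemma res_add: "x \<in> val_ring v \<Longrightarrow> y \<in> val_ring v \<Longrightarrow> res (x + y) = res x + res y"
  using residue_map unfolding residue_map_def by blast

lemma res_mult: "x \<in> val_ring v \<Longrightarrow> y \<in> val_ring v \<Longrightarrow> res (x * y) = res x * res y"
  using residue_map unfolding residue_map_def by blast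

lemma res_one [simp]: "res 1 = 1"
  using residue_map unfolding residue_map_def by blast

lemma res_surj: "\<exists>x\<in>val_ring v. res x = c"
  using residue_map unfolding residue_map_def by blast

lemma res_eq_0_iff: "x \<in> val_ring v \<Longrightarrow> res x = 0 \<longleftrightarrow> x = 0 \<or> 0 < v x"
  using residue_map unfolding residue_map_def by blast

lemma res_minus_one [simp]: "res (- 1) = - 1"
proof -
  have "- 1 \<in> val_ring v" "1 \<in> val_ring v"
    by (simp_all add: val_ring_def)
  then have "res (- 1) + 1 = res 0"
    using res_add[of "- 1" 1] by simp
  moreover have "res 0 = 0"
    by (simp add: res_eq_0_iff val_ring_def)
  ultimately show ?thesis
    by (simp add: eq_neg_iff_add_eq_0)
qed

lemma res_minus: "x \<in> val_ring v \<Longrightarrow> res (- x) = - res x"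
  using res_mult[of "- 1" x] by (simp add: val_ring_def)

lemma res_square: "x \<in> val_ring v \<Longrightarrow> res (x^2) = (res x)^2"
  by (simp add: power2_eq_square res_mult)

lemma unit_of_res_nonzero: "x \<in> val_ring v \<Longrightarrow> res x \<noteq> 0 \<Longrightarrow> x \<noteq> 0 \<and> v x = 0"
  using res_eq_0_iff[of x] by (auto simp: val_ring_def)

lemma res_nonzero_of_unit: "x \<noteq> 0 \<Longrightarrow> v x = 0 \<Longrightarrow> x \<in> val_ring v \<and> res x \<noteq> 0"
  using res_eq_0_iff[of x] by (auto simp: val_ring_def)

end

locale henselian_euclidean_valued_field = residue_valued_field v res
  for v :: "'k::field \<Rightarrow> 'g::linordered_ab_group_add" and res :: "'k \<Rightarrow> 'f::field" +
  assumes two_henselian: "two_henselian v res"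
    and euclidean_residue_field: "euclidean_field TYPE('f)"
begin

lemma residue_sum_of_squares_neq_minus_one: "(c::'f)^2 + d^2 \<noteq> - 1"
proof
  assume "c^2 + d^2 = - 1"
  then have "sum_of_squares (- 1 :: 'f)"
    unfolding sum_of_squares_def by (intro exI[of _ "[c, d]"]) simp
  then show False
    using euclidean_residue_field unfolding euclidean_field_def formally_real_def by blast
qed

lemma residue_square_or_minus_square: "\<exists>d. (c::'f) = d^2 \<or> c = - (d^2)"
  using euclidean_residue_field unfolding euclidean_field_def by blast

lemma residue_one_plus_square: "\<exists>d. d \<noteq> 0 \<and> 1 + (c::'f)^2 = d^2"
proof -
  obtain d where "1 + c^2 = d^2 \<or> 1 + c^2 = - (d^2)"
    using residue_square_or_minus_square by blast
  moreover have "1 + c^2 \<noteq> - (d^2)" "1 + c^2 \<noteq> 0"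
    using residue_sum_of_squares_neq_minus_one[of c d] residue_sum_of_squares_neq_minus_one[of c 0]
    by (simp_all add: eq_neg_iff_add_eq_0 add_ac)
  ultimately show ?thesis
    by auto
qed

lemma unit_square_of_res_square:
  assumes "x \<noteq> 0" "v x = 0" "res x = d^2"
  shows "\<exists>y. x = y^2"
proof -
  obtain w where w: "w \<in> val_ring v" "res w = d"
    using res_surj by blast
  have "d \<noteq> 0"
    using res_nonzero_of_unit assms by fastforce
  then have w_unit: "w \<noteq> 0" "v w = 0"
    using unit_of_res_nonzero w by auto
  define q where "q = x / w^2"
  have q_unit: "q \<noteq> 0" "v q = 0"
    using assms w_unit by (simp_all add: q_def v_divide v_power2)
  have "res x = res q * res (w^2)"
    using q_unit w_unit res_mult[of q "w^2"] by (simp add: q_def val_ring_def v_power2)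
  then have "res q = 1"
    using assms(3) w \<open>d \<noteq> 0\<close> res_square by simp
  then obtain y where "q = y^2"
    using two_henselian q_unit unfolding two_henselian_def val_units_def by blast
  then have "x = (y * w)^2"
    using w_unit by (simp add: q_def power_mult_distrib divide_eq_eq)
  then show ?thesis ..
qed

lemma unit_square_or_minus_square:
  assumes "x \<noteq> 0" "v x = 0"
  shows "\<exists>y. x = y^2 \<or> - x = y^2"
proof -
  obtain d where "res x = d^2 \<or> res (- x) = d^2"
    using residue_square_or_minus_square[of "res x"] res_minus res_nonzero_of_unit assms
    by (metis minus_minus)
  then show ?thesis
    using unit_square_of_res_square[of x d] unit_square_of_res_square[of "- x" d] assms v_minus
    by auto
qed

lemma one_plus_square_of_integral: "t \<in> val_ring v \<Longrightarrow> \<exists>y. 1 + t^2 = y^2"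
proof -
  assume t: "t \<in> val_ring v"
  obtain d where d: "d \<noteq> 0" "1 + (res t)^2 = d^2"
    using residue_one_plus_square by blast
  have t2: "t^2 \<in> val_ring v"
    using t val_ring_mult by (simp add: power2_eq_square)
  have "1 \<in> val_ring v"
    by (simp add: val_ring_def)
  then have "res (1 + t^2) = d^2" and "1 + t^2 \<in> val_ring v"
    using res_add[of 1 "t^2"] t t2 d res_square val_ring_add by auto
  moreover from calculation have "1 + t^2 \<noteq> 0" "v (1 + t^2) = 0"
    using unit_of_res_nonzero d(1) by auto
  ultimately show ?thesis
    using unit_square_of_res_square by blast
qed

lemma one_plus_infinitesimal_square: "0 < v t \<Longrightarrow> \<exists>y. 1 + t = y^2"
proof (cases "t = 0")
  case False
  assume vt: "0 < v t"
  have unit: "1 + t \<noteq> 0" "v (1 + t) = 0"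
    using v_add_eq_of_less[of 1 t] False vt by simp_all
  have "t \<in> val_ring v" "1 \<in> val_ring v"
    using vt by (simp_all add: val_ring_def less_imp_le)
  then have "res (1 + t) = 1"
    using res_add res_eq_0_iff False vt by simp
  then show ?thesis
    using two_henselian unit unfolding two_henselian_def val_units_def by blast
qed (rule exI[of _ 1], simp)

lemma add_of_smaller_value:
  assumes "x \<noteq> 0" "y \<noteq> 0" "v x < v y"
  shows "\<exists>z. z \<noteq> 0 \<and> x + y = x * z^2"
proof -
  have "0 < v (y / x)"
    using assms by (simp add: v_divide)
  then obtain z where z: "1 + y / x = z^2"
    using one_plus_infinitesimal_square by blast
  then have "x + y = x * z^2"
    using assms(1) by (simp add: field_simps)
  moreover have "z \<noteq> 0"
    using calculation v_add_eq_of_less(1)[OF assms] by auto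
  ultimately show ?thesis
    by blast
qed

lemma sum_two_squares_is_square: "\<exists>z. x^2 + y^2 = (z::'k)^2"
proof -
  have "\<exists>z. x^2 + y^2 = (z::'k)^2" if "v x \<le> v y" "x \<noteq> 0" for x y
  proof (cases "y = 0")
    case False
    then have "y / x \<in> val_ring v"
      using that by (simp add: val_ring_def v_divide)
    then obtain z where "1 + (y / x)^2 = z^2"
      using one_plus_square_of_integral by blast
    then have "x^2 + y^2 = (x * z)^2"
      using that(2) by (simp add: field_simps power_mult_distrib)
    then show ?thesis ..
  qed auto
  note ordered = this
  consider "x = 0" | "y = 0" | "x \<noteq> 0" "v x \<le> v y" | "y \<noteq> 0" "v y \<le> v x"
    using le_cases by blast
  then show ?thesis
  proof cases
    case 4
    then show ?thesis
      using ordered[of y x] by (simp add: add.commute)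
  qed (use ordered in auto)
qed

theorem pythagorean: "sum_of_squares s \<Longrightarrow> \<exists>y. s = (y::'k)^2"
proof -
  have "\<exists>y. sum_list (map (\<lambda>x. x^2) xs) = (y::'k)^2" for xs
    by (induction xs) (auto intro: exI[of _ 0] simp: sum_two_squares_is_square)
  then show "sum_of_squares s \<Longrightarrow> \<exists>y. s = (y::'k)^2"
    unfolding sum_of_squares_def by blast
qed

lemma PO_eq: "PO (f::'k) = {a^2 + b^2 * f | a b. True}"
  unfolding PO_def using pythagorean square_sum_of_squares by blast

lemma minus_one_not_square: "(- 1 :: 'k) \<noteq> y^2"
proof
  assume sq: "- 1 = y^2"
  then have "y \<noteq> 0"
    by auto
  moreover have "v (y^2) = 0"
    using sq by (metis v_minus_one)
  ultimately have "v y = 0"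
    using v_power2 by simp
  then have "res (- 1) = (res y)^2"
    using sq res_square by (simp add: val_ring_def)
  then show False
    using residue_sum_of_squares_neq_minus_one[of "res y" 0] by simp
qed

lemma two_neq_zero: "(2::'k) \<noteq> 0"
proof
  assume "(2::'k) = 0"
  then have "(1::'k) + 1 = 0"
    by simp
  then have "(- 1 :: 'k) = 1^2"
    by (simp only: add_eq_0_iff power_one)
  then show False
    using minus_one_not_square by blast
qed

lemma PO_square: "PO ((e::'k)^2) = squares"
proof
  show "PO (e^2) \<subseteq> squares"
    using sum_two_squares_is_square unfolding PO_eq squares_def
    by (auto simp flip: power_mult_distrib)
qed (rule squares_subset_PO)

lemma PO_minus_square: "e \<noteq> 0 \<Longrightarrow> PO (- (e^2)) = (UNIV::'k set)"
proof -
  assume "e \<noteq> 0"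
  have "x = ((x + 1) / 2)^2 + ((x - 1) / (2 * e))^2 * (- (e^2))" for x :: 'k
  proof -
    have "((x + 1) / 2)^2 - ((x - 1) / 2)^2 = ((x + 1)^2 - (x - 1)^2) / 2^2"
      by (simp only: power_divide diff_divide_distrib[symmetric])
    also have "\<dots> = (2^2 * x) / 2^2"
      by (simp add: power2_eq_square algebra_simps)
    also have "\<dots> = x"
      by (rule nonzero_mult_div_cancel_left[OF power_not_zero[OF two_neq_zero]])
    finally have "((x + 1) / 2)^2 - ((x - 1) / 2)^2 = x" .
    moreover have "((x - 1) / (2 * e))^2 * (- (e^2)) = - (((x - 1) / 2)^2)"
      using \<open>e \<noteq> 0\<close> by (simp add: power_divide power_mult_distrib)
    ultimately show ?thesis
      by (metis diff_conv_add_uminus)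
  qed
  then show ?thesis
    unfolding PO_eq by blast
qed

lemma PO_mult_square: "c \<noteq> 0 \<Longrightarrow> PO (c^2 * f) = PO (f::'k)"
proof -
  assume "c \<noteq> 0"
  have "a^2 + b^2 * (c^2 * f) = a^2 + (b * c)^2 * f" for a b
    by (simp add: power_mult_distrib)
  moreover have "a^2 + b^2 * f = a^2 + (b / c)^2 * (c^2 * f)" for a b
    using \<open>c \<noteq> 0\<close> by (simp add: power_divide)
  ultimately show ?thesis
    unfolding PO_eq by blast
qed

lemma PO_of_even_value:
  assumes "f \<noteq> 0" "v f = g + g"
  shows "PO f = squares \<or> PO f = UNIV"
proof -
  obtain w where w: "w \<noteq> 0" "v w = g"
    using v_surj by blast
  have "f / w^2 \<noteq> 0" "v (f / w^2) = 0"
    using assms w by (simp_all add: v_divide v_power2)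
  then obtain y where "f / w^2 = y^2 \<or> - (f / w^2) = y^2"
    using unit_square_or_minus_square by blast
  then have "f = (y * w)^2 \<or> f = - ((y * w)^2)"
  proof
    assume "f / w^2 = y^2"
    then show ?thesis
      using w by (simp add: power_mult_distrib divide_eq_eq)
  next
    assume "- (f / w^2) = y^2"
    then have "f / w^2 = - (y^2)"
      by (metis minus_minus)
    then show ?thesis
      using w by (simp add: power_mult_distrib divide_eq_eq)
  qed
  moreover have "y * w \<noteq> 0"
    using calculation assms(1) by auto
  ultimately show ?thesis
    using PO_square PO_minus_square by auto
qed

lemma PO_elem_of_odd_value:
  assumes odd: "\<not> (\<exists>g. v f = g + g)" and "x \<in> PO f"
  shows "\<exists>c. x = c^2 \<or> x = c^2 * f"
proof -
  obtain a b where x: "x = a^2 + b^2 * f"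
    using \<open>x \<in> PO f\<close> unfolding PO_eq by blast
  have "\<exists>c. a^2 + b^2 * f = c^2 \<or> a^2 + b^2 * f = c^2 * f"
    if nonzero: "a \<noteq> 0" "b \<noteq> 0" "f \<noteq> 0"
  proof -
    have "v (a^2) \<noteq> v (b^2 * f)"
    proof
      assume "v (a^2) = v (b^2 * f)"
      then have "v f = (v a - v b) + (v a - v b)"
        using nonzero by (simp add: v_mult v_power2 algebra_simps)
      then show False
        using odd by blast
    qed
    then consider "v (a^2) < v (b^2 * f)" | "v (b^2 * f) < v (a^2)"
      by fastforce
    then show ?thesis
    proof cases
      case 1
      then obtain z where "a^2 + b^2 * f = a^2 * z^2"
        using add_of_smaller_value[of "a^2" "b^2 * f"] nonzero by auto
      then show ?thesis
        by (metis power_mult_distrib)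
    next
      case 2
      then obtain z where "b^2 * f + a^2 = b^2 * f * z^2"
        using add_of_smaller_value[of "b^2 * f" "a^2"] nonzero by auto
      then show ?thesis
        by (metis add.commute mult.commute mult.left_commute power_mult_distrib)
    qed
  qed
  then show ?thesis
    unfolding x by (cases "a = 0"; cases "b = 0"; cases "f = 0") auto
qed

lemma PO_of_odd_value:
  assumes "f \<noteq> 0" and odd: "\<not> (\<exists>g. v f = g + g)"
  shows "PO f \<noteq> squares" "PO f \<noteq> UNIV"
proof -
  have "f \<notin> squares"
    using odd v_power2 assms(1) unfolding squares_def by fastforce
  then show "PO f \<noteq> squares"
    using mem_PO_self by blast
  have "- 1 \<notin> PO f"
  proof
    assume "- 1 \<in> PO f"
    then obtain c where "- 1 = c^2 \<or> - 1 = c^2 * f"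
      using PO_elem_of_odd_value odd by blast
    then have "- 1 = c^2 * f" and "c \<noteq> 0"
      using minus_one_not_square by auto
    then have "\<exists>g. v (c^2 * f) = g + g"
      by (metis add.right_neutral v_minus_one)
    then show False
      using even_value_mult_square_iff \<open>c \<noteq> 0\<close> assms(1) odd by blast
  qed
  then show "PO f \<noteq> UNIV"
    by blast
qed

lemma PO_trivial_iff_even_value:
  "f \<noteq> 0 \<Longrightarrow> (PO f = squares \<or> PO f = UNIV) \<longleftrightarrow> (\<exists>g. v f = g + g)"
  using PO_of_even_value PO_of_odd_value by blast

lemma PO_zero: "PO (0::'k) = squares"
  using PO_square[of 0] by simp

lemma exists_nontrivial_PO_iff: "(\<exists>f::'k. PO f \<noteq> squares \<and> PO f \<noteq> UNIV) \<longleftrightarrow> (\<exists>g::'g. \<forall>h. g \<noteq> h + h)"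
proof
  assume "\<exists>f::'k. PO f \<noteq> squares \<and> PO f \<noteq> UNIV"
  then obtain f :: 'k where "PO f \<noteq> squares" "PO f \<noteq> UNIV" by blast
  moreover from this have "f \<noteq> 0"
    using PO_zero by auto
  ultimately have "\<forall>h. v f \<noteq> h + h"
    using PO_trivial_iff_even_value by blast
  then show "\<exists>g::'g. \<forall>h. g \<noteq> h + h"
    by blast
next
  assume "\<exists>g::'g. \<forall>h. g \<noteq> h + h"
  then obtain g :: 'g where "\<forall>h. g \<noteq> h + h" ..
  moreover obtain f where "f \<noteq> 0" "v f = g"
    using v_surj by blast
  ultimately show "\<exists>f::'k. PO f \<noteq> squares \<and> PO f \<noteq> UNIV"
    using PO_of_odd_value by metis
qed

lemma PO_subset_imp_eq:
  fixes f\<^sub>1 f\<^sub>2 :: 'k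
  assumes "PO f\<^sub>1 \<notin> {UNIV, squares}" "PO f\<^sub>2 \<notin> {UNIV, squares}" "PO f\<^sub>1 \<subseteq> PO f\<^sub>2"
  shows "PO f\<^sub>1 = PO f\<^sub>2"
proof -
  have "\<not> (\<exists>g. v f = g + g)" if "PO f \<notin> {UNIV, squares}" for f :: 'k
  proof -
    have "f \<noteq> 0"
      using that PO_zero by auto
    with that show ?thesis
      using PO_trivial_iff_even_value by blast
  qed
  then have nonzero: "f\<^sub>1 \<noteq> 0" "f\<^sub>2 \<noteq> 0" and odd: "\<not> (\<exists>g. v f\<^sub>1 = g + g)" "\<not> (\<exists>g. v f\<^sub>2 = g + g)"
    using assms(1,2) PO_zero by auto
  obtain c where "f\<^sub>1 = c^2 \<or> f\<^sub>1 = c^2 * f\<^sub>2"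
    using PO_elem_of_odd_value[OF odd(2)] mem_PO_self assms(3) by blast
  moreover have "c \<noteq> 0"
    using calculation nonzero by auto
  moreover have "f\<^sub>1 \<noteq> c^2"
    using odd(1) v_power2[OF \<open>c \<noteq> 0\<close>] by blast
  ultimately have "f\<^sub>1 = c^2 * f\<^sub>2"
    by blast
  then show ?thesis
    using PO_mult_square \<open>c \<noteq> 0\<close> by simp
qed

end

theorem mainTheorem17:
  fixes v :: "'k::field \<Rightarrow> 'g::linordered_ab_group_add"
    and res :: "'k \<Rightarrow> 'f::field"
    and an :: "'k \<Rightarrow> 'f"
  assumes "valuation v"
    and "residue_map v res"
    and "two_henselian v res"
    and "euclidean_field TYPE('f)"
    and "angular_component v res an"
  shows "(\<forall>s::'k. sum_of_squares s \<longrightarrow> (\<exists>y. s = y ^ 2))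
    \<and> PO (1::'k) = squares \<and> PO (- 1 :: 'k) = UNIV
    \<and> (\<forall>f::'k. f \<noteq> 0 \<longrightarrow> ((PO f = squares \<or> PO f = UNIV) \<longleftrightarrow> (\<exists>g. v f = g + g)))
    \<and> ((\<exists>f::'k. PO f \<noteq> squares \<and> PO f \<noteq> UNIV) \<longleftrightarrow> (\<exists>g::'g. \<forall>h. g \<noteq> h + h))
    \<and> (\<forall>f::'k. squares \<subseteq> PO f \<and> PO f \<subseteq> UNIV)
    \<and> (\<forall>f1 f2::'k. PO f1 \<notin> {UNIV, squares} \<longrightarrow> PO f2 \<notin> {UNIV, squares} \<longrightarrow>
         PO f1 \<subseteq> PO f2 \<longrightarrow> PO f1 = PO f2)"
proof -
  interpret henselian_euclidean_valued_field v res
    using assms(1-4) by unfold_locales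
  have "PO (1::'k) = squares" "PO (- 1 :: 'k) = UNIV"
    using PO_square[of 1] PO_minus_square[of 1] by simp_all
  then show ?thesis
    using pythagorean PO_trivial_iff_even_value exists_nontrivial_PO_iff squares_subset_PO
      PO_subset_imp_eq
    by blast
qed

end
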